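(* Let $\kappa\in\mathbb{N}$, $\eta\in\{2,3,\ldots\}\cup\{\infty\}$ and $\pmb{\lambda}=\{\lambda_{-k}\}_{k=0}^{\kappa-1}\cup\{\lambda_{i,1}\}_{i=1}^{\eta}\subset(0,\infty)$. Define $\mathbf{c}_\kappa=(c_0,\ldots,c_{\kappa+1})$ by $c_n=\prod_{j=\kappa-n}^{\kappa-1}\lambda_{-j}^2$ for $n\in\mathbb{N}\cap[0,\kappa]$ (so $c_0=1$, $c_1=\lambda_{-\kappa+1}^2,\ldots,c_\kappa=\prod_{j=0}^{\kappa-1}\lambda_{-j}^2$) and $c_{\kappa+1}=\prod_{j=0}^{\kappa-1}\lambda_{-j}^2\sum_{i=1}^{\eta}\lambda_{i,1}^2$. The following are equivalent: (i) there exists a completely hyperexpansive completion of $\pmb{\lambda}$ on $\mathcal{T}_{\eta,\kappa}$; (ii) $\mathbf{c}_\kappa$ has a completely alternating extension. Moreover, if (i) holds, then $\pmb{\lambda}$ has a $2$-generation flat completely hyperexpansive completion.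
   Context: $\mathcal{T}_{\eta,\kappa}$: vertices $\{-k:k\in\mathbb{N}\cap[0,\kappa]\}\sqcup\{(i,j):i\in\mathbb{N}\cap[1,\eta],j\ge1\}$, edges $(-k,-k+1)$ ($1\le k\le\kappa$), $(0,(i,1))$, $((i,j),(i,j+1))$. A weighted shift with weights $(\lambda_v)$ (weight at vertex $v\neq$ root) and $\sup_v\sum_{u\text{ child of }v}|\lambda_u|^2<\infty$ is $S e_v=\sum_{u\text{ child of }v}\lambda_ue_u$ on $\ell^2$ of the vertex set. A completion of the data is a bounded weighted shift on $\mathcal{T}_{\eta,\kappa}$ whose weights at $-k$ ($k\le\kappa-1$) and at $(i,1)$ equal the given ones. $S$ is $2$-generation flat if $\lambda_{i,j}=\lambda_{1,j}$ for all $j\ge2$ and all $i$. A real sequence $(a_k)_{k\ge0}$ is completely alternating if $\sum_{k=0}^n(-1)^k\binom nk a_{k+m}\le0$ for all $m\ge0$, $n\ge1$; $T$ is completely hyperexpansive if $(\|T^nf\|^2)_n$ is completely alternating for all $f$. A finite sequence $(c_0,\ldots,c_N)$ has a completely alternating extension if there is a completely alternating sequence $(a_k)_{k\ge0}$ with $a_k=c_k$ for $k\le N$. *)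

theory Defs
  imports "HOL-Analysis.Analysis" "HOL-Library.Extended_Nat"
begin

text \<open>Vertices of the tree: Neg k stands for the vertex -k, Br i j for (i,j).\<close>
datatype vtx = Neg nat | Br nat nat

definition tree_V :: "enat \<Rightarrow> nat \<Rightarrow> vtx set" where
  "tree_V \<eta> \<kappa> = {Neg k | k. k \<le> \<kappa>} \<union> {Br i j | i j. 1 \<le> i \<and> enat i \<le> \<eta> \<and> 1 \<le> j}"

text \<open>Parent of a non-root vertex (meaningful only on tree_V minus the root Neg kappa).\<close>
fun parent :: "vtx \<Rightarrow> vtx" where
  "parent (Neg k) = Neg (Suc k)"
| "parent (Br i (Suc 0)) = Neg 0"
| "parent (Br i (Suc (Suc j))) = Br i (Suc j)"
| "parent (Br i 0) = Br i 0"

definition children :: "enat \<Rightarrow> nat \<Rightarrow> vtx \<Rightarrow> vtx set" where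
  "children \<eta> \<kappa> v = {u \<in> tree_V \<eta> \<kappa>. u \<noteq> Neg \<kappa> \<and> parent u = v}"

definition bounded_weights :: "enat \<Rightarrow> nat \<Rightarrow> (vtx \<Rightarrow> complex) \<Rightarrow> bool" where
  "bounded_weights \<eta> \<kappa> w \<longleftrightarrow>
     (\<exists>M. \<forall>v \<in> tree_V \<eta> \<kappa>.
        (\<lambda>u. (cmod (w u))\<^sup>2) summable_on children \<eta> \<kappa> v \<and>
        (\<Sum>\<^sub>\<infinity>u\<in>children \<eta> \<kappa> v. (cmod (w u))\<^sup>2) \<le> M)"

definition ell2_vec :: "enat \<Rightarrow> nat \<Rightarrow> (vtx \<Rightarrow> complex) \<Rightarrow> bool" where
  "ell2_vec \<eta> \<kappa> f \<longleftrightarrow> (\<forall>u. u \<notin> tree_V \<eta> \<kappa> \<longrightarrow> f u = 0) \<and>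
     (\<lambda>u. (cmod (f u))\<^sup>2) summable_on tree_V \<eta> \<kappa>"

definition sqnorm :: "enat \<Rightarrow> nat \<Rightarrow> (vtx \<Rightarrow> complex) \<Rightarrow> real" where
  "sqnorm \<eta> \<kappa> f = (\<Sum>\<^sub>\<infinity>u\<in>tree_V \<eta> \<kappa>. (cmod (f u))\<^sup>2)"

text \<open>The weighted shift: S e_v = sum over children u of w u e_u, i.e. (S f)(u) = w u * f (parent u).\<close>
definition wshift :: "enat \<Rightarrow> nat \<Rightarrow> (vtx \<Rightarrow> complex) \<Rightarrow> (vtx \<Rightarrow> complex) \<Rightarrow> (vtx \<Rightarrow> complex)" where
  "wshift \<eta> \<kappa> w f = (\<lambda>u. if u \<in> tree_V \<eta> \<kappa> \<and> u \<noteq> Neg \<kappa> then w u * f (parent u) else 0)"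

definition completely_alternating :: "(nat \<Rightarrow> real) \<Rightarrow> bool" where
  "completely_alternating a \<longleftrightarrow>
     (\<forall>m n. n \<ge> 1 \<longrightarrow> (\<Sum>k\<le>n. (-1)^k * real (n choose k) * a (k + m)) \<le> 0)"

definition has_CA_extension :: "(nat \<Rightarrow> real) \<Rightarrow> nat \<Rightarrow> bool" where
  "has_CA_extension c N \<longleftrightarrow> (\<exists>a. completely_alternating a \<and> (\<forall>k\<le>N. a k = c k))"

definition comp_hyperexpansive :: "enat \<Rightarrow> nat \<Rightarrow> (vtx \<Rightarrow> complex) \<Rightarrow> bool" where
  "comp_hyperexpansive \<eta> \<kappa> w \<longleftrightarrow>
     (\<forall>f. ell2_vec \<eta> \<kappa> f \<longrightarrow>
        completely_alternating (\<lambda>n. sqnorm \<eta> \<kappa> ((wshift \<eta> \<kappa> w ^^ n) f)))"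

definition is_completion :: "enat \<Rightarrow> nat \<Rightarrow> (vtx \<Rightarrow> real) \<Rightarrow> (vtx \<Rightarrow> complex) \<Rightarrow> bool" where
  "is_completion \<eta> \<kappa> lam w \<longleftrightarrow> bounded_weights \<eta> \<kappa> w \<and>
     (\<forall>k<\<kappa>. w (Neg k) = complex_of_real (lam (Neg k))) \<and>
     (\<forall>i. 1 \<le> i \<and> enat i \<le> \<eta> \<longrightarrow> w (Br i 1) = complex_of_real (lam (Br i 1)))"

definition two_gen_flat :: "enat \<Rightarrow> (vtx \<Rightarrow> complex) \<Rightarrow> bool" where
  "two_gen_flat \<eta> w \<longleftrightarrow> (\<forall>i j. 1 \<le> i \<and> enat i \<le> \<eta> \<and> j \<ge> 2 \<longrightarrow> w (Br i j) = w (Br 1 j))"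

definition cseq :: "enat \<Rightarrow> nat \<Rightarrow> (vtx \<Rightarrow> real) \<Rightarrow> nat \<Rightarrow> real" where
  "cseq \<eta> \<kappa> lam n =
     (if n \<le> \<kappa> then (\<Prod>j\<in>{\<kappa> - n..<\<kappa>}. (lam (Neg j))\<^sup>2)
      else (\<Prod>j<\<kappa>. (lam (Neg j))\<^sup>2) *
           (\<Sum>\<^sub>\<infinity>i\<in>{i. 1 \<le> i \<and> enat i \<le> \<eta>}. (lam (Br i 1))\<^sup>2))"

end

theory Submission
  imports Defs
begin

(* Write d(v) for the depth of a vertex v below the root -kappa.
   Necessity: for the indicator e of the root, the squared norm of S^n e is the sum of the
   squared weight products along the paths from the root to generation n, which is c_n for
   n <= kappa + 1.  Hence these norms form a completely alternating extension of c_kappa.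
   Sufficiency: given a completely alternating extension a of c_kappa (so a >= a 0 = 1), put
   the weight sqrt (a (kappa + j) / a (kappa + j - 1)) at every (i,j) with j >= 2.  Give each
   trunk vertex the share 1 and each (i,j) the share lambda_{i,1}^2 / sum_i' lambda_{i',1}^2.
   The squared weight product along a path of length N ending at u is then
   a (d u) / a (d u - N) times the ratio of the shares of its endpoints, and the shares of the
   generation-N descendants of v add up to the share of v.  So these products sum to
   a (d v + N) / a (d v), and the squared norm of S^N f is
   sum_v |f v|^2 a (d v + N) / a (d v), a nonnegative combination of shifts of a, which is
   completely alternating. *)

abbreviation branches :: "enat \<Rightarrow> nat set" where
  "branches \<eta> \<equiv> {i. 1 \<le> i \<and> enat i \<le> \<eta>}"

definition depth :: "nat \<Rightarrow> vtx \<Rightarrow> nat" where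
  "depth \<kappa> u = (case u of Neg k \<Rightarrow> \<kappa> - k | Br i j \<Rightarrow> \<kappa> + j)"

definition ancestor :: "nat \<Rightarrow> vtx \<Rightarrow> vtx" where
  "ancestor n = parent ^^ n"

definition descendants :: "enat \<Rightarrow> nat \<Rightarrow> nat \<Rightarrow> vtx \<Rightarrow> vtx set" where
  "descendants \<eta> \<kappa> N v = {u \<in> tree_V \<eta> \<kappa>. N \<le> depth \<kappa> u \<and> ancestor N u = v}"

definition path_weight :: "(vtx \<Rightarrow> complex) \<Rightarrow> nat \<Rightarrow> vtx \<Rightarrow> complex" where
  "path_weight w N u = (\<Prod>m<N. w (ancestor m u))"

lemma mem_tree_V:
  "u \<in> tree_V \<eta> \<kappa> \<longleftrightarrow>
     (\<exists>k. u = Neg k \<and> k \<le> \<kappa>) \<or> (\<exists>i j. u = Br i j \<and> i \<in> branches \<eta> \<and> 1 \<le> j)"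
  unfolding tree_V_def by auto

lemma Neg_in_tree_V [simp]: "Neg k \<in> tree_V \<eta> \<kappa> \<longleftrightarrow> k \<le> \<kappa>"
  unfolding tree_V_def by auto

lemma Br_in_tree_V [simp]: "Br i j \<in> tree_V \<eta> \<kappa> \<longleftrightarrow> i \<in> branches \<eta> \<and> 1 \<le> j"
  unfolding tree_V_def by auto

lemma depth_eq_0_iff: "u \<in> tree_V \<eta> \<kappa> \<Longrightarrow> depth \<kappa> u = 0 \<longleftrightarrow> u = Neg \<kappa>"
  by (auto simp: mem_tree_V depth_def)

lemma parent_in_tree_V:
  assumes "u \<in> tree_V \<eta> \<kappa>" "u \<noteq> Neg \<kappa>"
  shows "parent u \<in> tree_V \<eta> \<kappa> \<and> depth \<kappa> (parent u) = depth \<kappa> u - 1"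
  using assms by (induction u rule: parent.induct) (auto simp: depth_def)

lemma ancestor_0 [simp]: "ancestor 0 u = u"
  by (simp add: ancestor_def)

lemma ancestor_Suc: "ancestor (Suc n) u = parent (ancestor n u)"
  by (simp add: ancestor_def)

lemma ancestor_Suc': "ancestor (Suc n) u = ancestor n (parent u)"
  by (simp only: ancestor_def funpow_Suc_right comp_def)

lemma ancestor_in_tree_V:
  assumes "u \<in> tree_V \<eta> \<kappa>" "N \<le> depth \<kappa> u"
  shows "ancestor N u \<in> tree_V \<eta> \<kappa> \<and> depth \<kappa> (ancestor N u) = depth \<kappa> u - N"
  using assms(2)
proof (induction N)
  case (Suc N)
  then have IH: "ancestor N u \<in> tree_V \<eta> \<kappa>" "depth \<kappa> (ancestor N u) = depth \<kappa> u - N"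
    by auto
  moreover have "ancestor N u \<noteq> Neg \<kappa>"
    using IH Suc.prems depth_eq_0_iff[OF IH(1)] by auto
  ultimately show ?case by (simp add: ancestor_Suc parent_in_tree_V)
qed (use assms in simp)

lemma ancestor_Neg: "ancestor N (Neg k) = Neg (k + N)"
  by (induction N) (auto simp: ancestor_Suc)

lemma ancestor_Br:
  "1 \<le> j \<Longrightarrow> ancestor N (Br i j) = (if N < j then Br i (j - N) else Neg (N - j))"
proof (induction N arbitrary: j)
  case (Suc N)
  then obtain t where "j = Suc t" by (cases j) auto
  then show ?case
    using Suc by (cases t) (auto simp: ancestor_Suc' ancestor_Neg)
qed simp

lemma descendants_Neg:
  assumes "k \<le> \<kappa>"
  shows "descendants \<eta> \<kappa> N (Neg k) =
           (if N \<le> k then {Neg (k - N)} else (\<lambda>i. Br i (N - k)) ` branches \<eta>)"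
  using assms
  by (auto simp: descendants_def mem_tree_V depth_def ancestor_Neg ancestor_Br split: if_splits)

lemma descendants_Br:
  assumes "i \<in> branches \<eta>" "1 \<le> j"
  shows "descendants \<eta> \<kappa> N (Br i j) = {Br i (j + N)}"
  using assms
  by (auto simp: descendants_def mem_tree_V depth_def ancestor_Neg ancestor_Br split: if_splits)

lemma children_eq_descendants_1: "children \<eta> \<kappa> v = descendants \<eta> \<kappa> 1 v"
  using depth_eq_0_iff[of _ \<eta> \<kappa>]
  by (fastforce simp: children_def descendants_def ancestor_Suc)

lemma path_weight_Suc: "path_weight w (Suc N) u = w u * path_weight w N (parent u)"
  unfolding path_weight_def prod.lessThan_Suc_shift
  by (simp add: ancestor_Suc' del: prod.lessThan_Suc)

lemma wshift_power:
  assumes "\<And>u. u \<notin> tree_V \<eta> \<kappa> \<Longrightarrow> f u = 0"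
  shows "(wshift \<eta> \<kappa> w ^^ N) f u =
           (if u \<in> tree_V \<eta> \<kappa> \<and> N \<le> depth \<kappa> u then path_weight w N u * f (ancestor N u) else 0)"
proof (induction N arbitrary: u)
  case 0
  then show ?case using assms by (simp add: path_weight_def)
next
  case (Suc N)
  show ?case
  proof (cases "u \<in> tree_V \<eta> \<kappa> \<and> u \<noteq> Neg \<kappa>")
    case True
    then have "(wshift \<eta> \<kappa> w ^^ Suc N) f u = w u * (wshift \<eta> \<kappa> w ^^ N) f (parent u)"
      by (simp add: wshift_def)
    moreover have "1 \<le> depth \<kappa> u" using True depth_eq_0_iff[of u \<eta> \<kappa>] by simp
    ultimately show ?thesis
      using True parent_in_tree_V[of u \<eta> \<kappa>]
      by (auto simp: Suc path_weight_Suc ancestor_Suc')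
  next
    case False
    then show ?thesis using depth_eq_0_iff[of u \<eta> \<kappa>] by (auto simp: wshift_def)
  qed
qed

lemma has_sum_sum:
  fixes f :: "'i \<Rightarrow> 'a \<Rightarrow> 'b::topological_comm_monoid_add"
  assumes "finite K" "\<And>k. k \<in> K \<Longrightarrow> (f k has_sum s k) A"
  shows "((\<lambda>x. \<Sum>k\<in>K. f k x) has_sum (\<Sum>k\<in>K. s k)) A"
  using assms by (induction K rule: finite_induct) (auto intro: has_sum_add)

lemma has_sum_fibers_nonneg:
  fixes g :: "'a \<Rightarrow> real"
  assumes "\<And>u. u \<in> U \<Longrightarrow> 0 \<le> g u" and "\<And>u. u \<in> U \<Longrightarrow> \<phi> u \<in> A"
    and fibers: "\<And>x. x \<in> A \<Longrightarrow> (g has_sum b x) {u \<in> U. \<phi> u = x}"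
    and "b summable_on A"
  shows "(g has_sum infsum b A) U"
proof -
  define B where "B x = {u \<in> U. \<phi> u = x}" for x
  have U: "U = (\<Union>x\<in>A. B x)" and U': "U = snd ` Sigma A B"
    using assms(2) by (auto simp: B_def image_iff)
  have "g summable_on U"
    unfolding U
    by (rule summable_on_UnionI[where g = b])
       (use assms in \<open>auto simp: B_def disjoint_family_on_def\<close>)
  then have "(g has_sum infsum g U) (snd ` Sigma A B)"
    by (simp flip: U')
  then have "((g \<circ> snd) has_sum infsum g U) (Sigma A B)"
    by (subst (asm) has_sum_reindex) (auto simp: inj_on_def B_def)
  then have "(b has_sum infsum g U) A"
    by (rule has_sum_SigmaD) (use fibers in \<open>simp add: B_def\<close>)
  with \<open>g summable_on U\<close> show ?thesis
    by (metis has_sum_infsum infsumI)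
qed

lemma completely_alternating_incseq:
  assumes "completely_alternating a"
  shows "incseq a"
proof (rule incseq_SucI)
  fix m
  show "a m \<le> a (Suc m)"
    using assms unfolding completely_alternating_def by (elim allE[of _ m] allE[of _ 1]) simp
qed

lemma completely_alternating_concave:
  assumes "completely_alternating a"
  shows "a (Suc (Suc m)) - a (Suc m) \<le> a (Suc m) - a m"
  using assms unfolding completely_alternating_def
  by (elim allE[of _ m] allE[of _ 2]) (simp add: numeral_2_eq_2)

lemma completely_alternating_diff_le:
  assumes "completely_alternating a"
  shows "a (Suc m) - a m \<le> a 1 - a 0"
proof (induction m)
  case (Suc m)
  then show ?case using completely_alternating_concave[OF assms, of m] by linarith
qed simp

lemma completely_alternating_growth:
  assumes "completely_alternating a" "a 0 = 1"
  shows "a (d + N) \<le> a 1 ^ N * a d"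
proof (induction N)
  case (Suc N)
  have "1 \<le> a 1" and "1 \<le> a (d + N)"
    using incseqD[OF completely_alternating_incseq[OF assms(1)], of 0] assms(2) by simp_all
  moreover have "a (Suc (d + N)) \<le> a (d + N) + (a 1 - 1)"
    using completely_alternating_diff_le[OF assms(1), of "d + N"] assms(2) by simp
  ultimately have "a (Suc (d + N)) \<le> a 1 * a (d + N)"
    using mult_right_mono[of 1 "a (d + N)" "a 1 - 1"] by (simp add: algebra_simps)
  also have "\<dots> \<le> a 1 * (a 1 ^ N * a d)"
    using Suc \<open>1 \<le> a 1\<close> by (simp add: mult_left_mono)
  finally show ?case by simp
qed simp

lemma completely_alternating_scale_shift:
  assumes "completely_alternating a" "0 \<le> c"
  shows "completely_alternating (\<lambda>n. c * a (n + d))"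
  unfolding completely_alternating_def
proof (intro allI impI)
  fix m n :: nat
  assume "1 \<le> n"
  then have "(\<Sum>k\<le>n. (-1)^k * real (n choose k) * a (k + (m + d))) \<le> 0"
    using assms(1) unfolding completely_alternating_def by blast
  moreover have "(\<Sum>k\<le>n. (-1)^k * real (n choose k) * (c * a (k + m + d))) =
                 c * (\<Sum>k\<le>n. (-1)^k * real (n choose k) * a (k + (m + d)))"
    by (simp add: sum_distrib_left add.assoc mult.left_commute)
  ultimately show "(\<Sum>k\<le>n. (-1)^k * real (n choose k) * (c * a (k + m + d))) \<le> 0"
    using assms(2) by (metis mult_nonneg_nonpos)
qed

lemma completely_alternating_infsum:
  assumes "\<And>x. x \<in> A \<Longrightarrow> completely_alternating (\<lambda>n. b n x)" "\<And>n. b n summable_on A"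
  shows "completely_alternating (\<lambda>n. infsum (b n) A)"
  unfolding completely_alternating_def
proof (intro allI impI)
  fix m n :: nat
  assume "1 \<le> n"
  have "((\<lambda>x. \<Sum>k\<le>n. (-1)^k * real (n choose k) * b (k + m) x) has_sum
          (\<Sum>k\<le>n. (-1)^k * real (n choose k) * infsum (b (k + m)) A)) A"
    by (intro has_sum_sum has_sum_cmult_right has_sum_infsum assms(2)) simp
  then show "(\<Sum>k\<le>n. (-1)^k * real (n choose k) * infsum (b (k + m)) A) \<le> 0"
  proof (rule has_sum_mono[OF _ has_sum_0_simp])
    fix x
    assume "x \<in> A"
    then show "(\<Sum>k\<le>n. (-1)^k * real (n choose k) * b (k + m) x) \<le> 0"
      using assms(1) \<open>1 \<le> n\<close> unfolding completely_alternating_def by blast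
  qed
qed

definition root_indicator :: "nat \<Rightarrow> vtx \<Rightarrow> complex" where
  "root_indicator \<kappa> u = (if u = Neg \<kappa> then 1 else 0)"

lemma root_indicator_ell2: "ell2_vec \<eta> \<kappa> (root_indicator \<kappa>)"
  unfolding ell2_vec_def
proof
  show "\<forall>u. u \<notin> tree_V \<eta> \<kappa> \<longrightarrow> root_indicator \<kappa> u = 0"
    by (simp add: root_indicator_def)
  have "(\<lambda>u. (cmod (root_indicator \<kappa> u))\<^sup>2) summable_on {Neg \<kappa>}"
    by simp
  then show "(\<lambda>u. (cmod (root_indicator \<kappa> u))\<^sup>2) summable_on tree_V \<eta> \<kappa>"
    by (subst summable_on_cong_neutral[of "{Neg \<kappa>}" "tree_V \<eta> \<kappa>"])
       (auto simp: root_indicator_def)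
qed

lemma sqnorm_power_root_indicator:
  "sqnorm \<eta> \<kappa> ((wshift \<eta> \<kappa> w ^^ n) (root_indicator \<kappa>)) =
     (\<Sum>\<^sub>\<infinity>u\<in>descendants \<eta> \<kappa> n (Neg \<kappa>). (cmod (path_weight w n u))\<^sup>2)"
  unfolding sqnorm_def
proof (rule infsum_cong_neutral)
  have "\<And>u. u \<notin> tree_V \<eta> \<kappa> \<Longrightarrow> root_indicator \<kappa> u = 0"
    by (auto simp: root_indicator_def)
  note power = wshift_power[OF this]
  show "(cmod ((wshift \<eta> \<kappa> w ^^ n) (root_indicator \<kappa>) u))\<^sup>2 = 0"
    if "u \<in> tree_V \<eta> \<kappa> - descendants \<eta> \<kappa> n (Neg \<kappa>)" for u
    using that by (simp add: power descendants_def root_indicator_def)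
  show "(cmod ((wshift \<eta> \<kappa> w ^^ n) (root_indicator \<kappa>) u))\<^sup>2 = (cmod (path_weight w n u))\<^sup>2"
    if "u \<in> tree_V \<eta> \<kappa> \<inter> descendants \<eta> \<kappa> n (Neg \<kappa>)" for u
    using that by (simp add: power descendants_def root_indicator_def)
qed (auto simp: descendants_def)

lemma path_weight_trunk:
  assumes "n \<le> \<kappa>"
  shows "(cmod (path_weight w n (Neg (\<kappa> - n))))\<^sup>2 = (\<Prod>j\<in>{\<kappa> - n..<\<kappa>}. (cmod (w (Neg j)))\<^sup>2)"
proof -
  have "(cmod (path_weight w n (Neg (\<kappa> - n))))\<^sup>2 = (\<Prod>m<n. (cmod (w (Neg (m + (\<kappa> - n)))))\<^sup>2)"
    unfolding path_weight_def ancestor_Neg prod_norm[symmetric] prod_power_distrib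
    by (simp add: add.commute)
  also have "\<dots> = (\<Prod>j\<in>{0 + (\<kappa> - n)..<n + (\<kappa> - n)}. (cmod (w (Neg j)))\<^sup>2)"
    by (simp only: prod.shift_bounds_nat_ivl lessThan_atLeast0)
  also have "{0 + (\<kappa> - n)..<n + (\<kappa> - n)} = {\<kappa> - n..<\<kappa>}"
    using assms by simp
  finally show ?thesis .
qed

lemma completion_branches_summable:
  assumes "is_completion \<eta> \<kappa> lam w"
  shows "(\<lambda>i. (lam (Br i 1))\<^sup>2) summable_on branches \<eta>"
proof -
  have "(\<lambda>u. (cmod (w u))\<^sup>2) summable_on children \<eta> \<kappa> (Neg 0)"
    using assms unfolding is_completion_def bounded_weights_def by (meson Neg_in_tree_V zero_le)
  moreover have "children \<eta> \<kappa> (Neg 0) = (\<lambda>i. Br i 1) ` branches \<eta>"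
    by (simp add: children_eq_descendants_1 descendants_Neg)
  ultimately have "((\<lambda>u. (cmod (w u))\<^sup>2) \<circ> (\<lambda>i. Br i 1)) summable_on branches \<eta>"
    by (simp add: summable_on_reindex inj_on_def)
  then show ?thesis
    by (rule summable_on_cong[THEN iffD1, rotated])
       (use assms in \<open>simp add: is_completion_def\<close>)
qed

lemma completion_sqnorm_power_root_indicator:
  assumes "is_completion \<eta> \<kappa> lam w" "n \<le> \<kappa> + 1"
  shows "sqnorm \<eta> \<kappa> ((wshift \<eta> \<kappa> w ^^ n) (root_indicator \<kappa>)) = cseq \<eta> \<kappa> lam n"
proof -
  have trunk: "w (Neg k) = complex_of_real (lam (Neg k))" if "k < \<kappa>" for k
    using assms(1) that by (simp add: is_completion_def)
  have trunk_product: "(cmod (path_weight w m (Neg (\<kappa> - m))))\<^sup>2 = (\<Prod>j\<in>{\<kappa> - m..<\<kappa>}. (lam (Neg j))\<^sup>2)"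
    if "m \<le> \<kappa>" for m
    unfolding path_weight_trunk[OF that] by (rule prod.cong) (simp_all add: trunk)
  show ?thesis
  proof (cases "n \<le> \<kappa>")
    case True
    then show ?thesis
      by (simp add: sqnorm_power_root_indicator descendants_Neg trunk_product cseq_def)
  next
    case False
    with assms(2) have n: "n = Suc \<kappa>" by simp
    have "sqnorm \<eta> \<kappa> ((wshift \<eta> \<kappa> w ^^ n) (root_indicator \<kappa>)) =
            (\<Sum>\<^sub>\<infinity>i\<in>branches \<eta>. (cmod (path_weight w (Suc \<kappa>) (Br i 1)))\<^sup>2)"
      unfolding sqnorm_power_root_indicator n descendants_Neg[OF order_refl]
      by (simp add: infsum_reindex inj_on_def o_def)
    also have "\<dots> = (\<Sum>\<^sub>\<infinity>i\<in>branches \<eta>. (lam (Br i 1))\<^sup>2 * (\<Prod>j<\<kappa>. (lam (Neg j))\<^sup>2))"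
    proof (rule infsum_cong)
      fix i
      assume "i \<in> branches \<eta>"
      then show "(cmod (path_weight w (Suc \<kappa>) (Br i 1)))\<^sup>2 =
                   (lam (Br i 1))\<^sup>2 * (\<Prod>j<\<kappa>. (lam (Neg j))\<^sup>2)"
        using assms(1) trunk_product[of \<kappa>]
        by (simp add: path_weight_Suc norm_mult power_mult_distrib is_completion_def
            atLeast0LessThan)
    qed
    also have "\<dots> = cseq \<eta> \<kappa> lam n"
      by (simp add: n cseq_def infsum_cmult_left' mult.commute)
    finally show ?thesis .
  qed
qed

lemma comp_hyperexpansive_completion_has_CA_extension:
  assumes "is_completion \<eta> \<kappa> lam w" "comp_hyperexpansive \<eta> \<kappa> w"
  shows "has_CA_extension (cseq \<eta> \<kappa> lam) (\<kappa> + 1)"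
  unfolding has_CA_extension_def
proof (intro exI conjI allI impI)
  show "completely_alternating (\<lambda>n. sqnorm \<eta> \<kappa> ((wshift \<eta> \<kappa> w ^^ n) (root_indicator \<kappa>)))"
    using assms(2) root_indicator_ell2 unfolding comp_hyperexpansive_def by blast
qed (rule completion_sqnorm_power_root_indicator[OF assms(1)])

definition flat_completion :: "nat \<Rightarrow> (vtx \<Rightarrow> real) \<Rightarrow> (nat \<Rightarrow> real) \<Rightarrow> vtx \<Rightarrow> complex" where
  "flat_completion \<kappa> lam a u =
     (case u of
        Neg k \<Rightarrow> complex_of_real (lam (Neg k))
      | Br i j \<Rightarrow> if j = 1 then complex_of_real (lam (Br i 1))
                 else complex_of_real (sqrt (a (\<kappa> + j) / a (\<kappa> + j - 1))))"

definition branch_share :: "enat \<Rightarrow> (vtx \<Rightarrow> real) \<Rightarrow> vtx \<Rightarrow> real" where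
  "branch_share \<eta> lam u =
     (case u of
        Neg k \<Rightarrow> 1
      | Br i j \<Rightarrow> (lam (Br i 1))\<^sup>2 / (\<Sum>\<^sub>\<infinity>i'\<in>branches \<eta>. (lam (Br i' 1))\<^sup>2))"

context
  fixes \<eta> :: enat and \<kappa> :: nat and lam :: "vtx \<Rightarrow> real" and a :: "nat \<Rightarrow> real"
  assumes branches_nonempty: "1 \<le> \<eta>"
    and branch_weights_pos: "\<And>i. i \<in> branches \<eta> \<Longrightarrow> 0 < lam (Br i 1)"
    and branches_summable: "(\<lambda>i. (lam (Br i 1))\<^sup>2) summable_on branches \<eta>"
    and CA: "completely_alternating a"
    and extends: "\<And>k. k \<le> \<kappa> + 1 \<Longrightarrow> a k = cseq \<eta> \<kappa> lam k"
begin

lemma a_0: "a 0 = 1"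
  using extends[of 0] by (simp add: cseq_def)

lemma a_ge_1: "1 \<le> a n"
  using incseqD[OF completely_alternating_incseq[OF CA], of 0 n] a_0 by simp

lemma branch_total_pos: "0 < (\<Sum>\<^sub>\<infinity>i\<in>branches \<eta>. (lam (Br i 1))\<^sup>2)"
proof -
  have "1 \<in> branches \<eta>"
    using branches_nonempty by (simp add: one_enat_def)
  then have "(lam (Br 1 1))\<^sup>2 \<le> (\<Sum>\<^sub>\<infinity>i\<in>branches \<eta>. (lam (Br i 1))\<^sup>2)"
    using finite_sum_le_infsum[OF branches_summable, of "{1}"] by simp
  moreover have "0 < (lam (Br 1 1))\<^sup>2"
    using branch_weights_pos[OF \<open>1 \<in> branches \<eta>\<close>] by simp
  ultimately show ?thesis
    by linarith
qed

lemma branch_share_pos: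
  assumes "u \<in> tree_V \<eta> \<kappa>"
  shows "0 < branch_share \<eta> lam u"
proof (cases u)
  case (Br i j)
  with assms have "0 < lam (Br i 1)"
    using branch_weights_pos by simp
  with Br show ?thesis
    using branch_total_pos by (simp add: branch_share_def)
qed (simp add: branch_share_def)

lemma flat_completion_sq:
  assumes "u \<in> tree_V \<eta> \<kappa>" "u \<noteq> Neg \<kappa>"
  shows "(cmod (flat_completion \<kappa> lam a u))\<^sup>2 =
           a (depth \<kappa> u) / a (depth \<kappa> u - 1) *
           (branch_share \<eta> lam u / branch_share \<eta> lam (parent u))"
proof (cases u)
  case (Neg k)
  with assms have "k < \<kappa>" by simp
  then have "a (\<kappa> - k) = (lam (Neg k))\<^sup>2 * a (\<kappa> - k - 1)"
    using extends[of "\<kappa> - k"] extends[of "\<kappa> - k - 1"]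
    by (simp add: cseq_def Suc_diff_Suc prod.atLeast_Suc_lessThan)
  with Neg show ?thesis
    using a_ge_1[of "\<kappa> - k - 1"] by (simp add: flat_completion_def branch_share_def depth_def)
next
  case (Br i j)
  with assms have "i \<in> branches \<eta>" "1 \<le> j" by simp_all
  show ?thesis
  proof (cases "j = 1")
    case True
    have "a (\<kappa> + 1) = a \<kappa> * (\<Sum>\<^sub>\<infinity>i\<in>branches \<eta>. (lam (Br i 1))\<^sup>2)"
      using extends[of \<kappa>] extends[of "\<kappa> + 1"] by (simp add: cseq_def atLeast0LessThan)
    with Br True show ?thesis
      using a_ge_1[of \<kappa>] branch_total_pos
      by (simp add: flat_completion_def branch_share_def depth_def)
  next
    case False
    with \<open>1 \<le> j\<close> have "j = Suc (Suc (j - 2))"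
      by arith
    then obtain t where "j = Suc (Suc t)"
      by blast
    with Br show ?thesis
      using a_ge_1[of "\<kappa> + j"] a_ge_1[of "\<kappa> + j - 1"] branch_total_pos
        branch_weights_pos[OF \<open>i \<in> branches \<eta>\<close>]
      by (simp add: flat_completion_def branch_share_def depth_def)
  qed
qed

lemma path_weight_sq:
  assumes "u \<in> tree_V \<eta> \<kappa>" "N \<le> depth \<kappa> u"
  shows "(cmod (path_weight (flat_completion \<kappa> lam a) N u))\<^sup>2 =
           a (depth \<kappa> u) / a (depth \<kappa> u - N) *
           (branch_share \<eta> lam u / branch_share \<eta> lam (ancestor N u))"
  using assms
proof (induction N arbitrary: u)
  case 0
  then show ?case
    using a_ge_1[of "depth \<kappa> u"] branch_share_pos[of u] by (simp add: path_weight_def)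
next
  case (Suc N)
  then have "u \<noteq> Neg \<kappa>"
    using depth_eq_0_iff[of u \<eta> \<kappa>] by auto
  with Suc.prems have parent: "parent u \<in> tree_V \<eta> \<kappa>" "depth \<kappa> (parent u) = depth \<kappa> u - 1"
    using parent_in_tree_V by blast+
  define d where "d = depth \<kappa> u"
  have nonzero: "a (d - 1) \<noteq> 0" "branch_share \<eta> lam (parent u) \<noteq> 0"
    using a_ge_1[of "d - 1"] branch_share_pos[OF parent(1)] by auto
  have "(cmod (path_weight (flat_completion \<kappa> lam a) (Suc N) u))\<^sup>2 =
          (cmod (flat_completion \<kappa> lam a u))\<^sup>2 *
          (cmod (path_weight (flat_completion \<kappa> lam a) N (parent u)))\<^sup>2"
    by (simp add: path_weight_Suc norm_mult power_mult_distrib)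
  also have "\<dots> = a d / a (d - 1) * (branch_share \<eta> lam u / branch_share \<eta> lam (parent u)) *
                   (a (d - 1) / a (d - 1 - N) *
                    (branch_share \<eta> lam (parent u) / branch_share \<eta> lam (ancestor N (parent u))))"
    using Suc.IH[OF parent(1)] Suc.prems(2) parent(2)
      flat_completion_sq[OF Suc.prems(1) \<open>u \<noteq> Neg \<kappa>\<close>]
    by (simp add: d_def)
  also have "\<dots> = a d / a (d - Suc N) *
                   (branch_share \<eta> lam u / branch_share \<eta> lam (ancestor (Suc N) u))"
    using nonzero by (simp add: ancestor_Suc')
  finally show ?case by (simp add: d_def)
qed

lemma branch_share_has_sum_descendants:
  assumes "v \<in> tree_V \<eta> \<kappa>"
  shows "(branch_share \<eta> lam has_sum branch_share \<eta> lam v) (descendants \<eta> \<kappa> N v)"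
proof (cases v)
  case (Neg k)
  with assms have "k \<le> \<kappa>" by simp
  show ?thesis
  proof (cases "N \<le> k")
    case True
    with Neg \<open>k \<le> \<kappa>\<close> show ?thesis
      by (simp add: descendants_Neg branch_share_def has_sum_finite_iff)
  next
    case False
    define s where "s = (\<Sum>\<^sub>\<infinity>i\<in>branches \<eta>. (lam (Br i 1))\<^sup>2)"
    have "((\<lambda>i. (lam (Br i 1))\<^sup>2 / s) has_sum s / s) (branches \<eta>)"
      unfolding s_def divide_inverse by (intro has_sum_cmult_left has_sum_infsum branches_summable)
    then have "((branch_share \<eta> lam \<circ> (\<lambda>i. Br i (N - k))) has_sum 1) (branches \<eta>)"
      using branch_total_pos by (simp add: branch_share_def o_def s_def)
    with Neg False \<open>k \<le> \<kappa>\<close> show ?thesis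
      by (simp add: descendants_Neg has_sum_reindex inj_on_def branch_share_def)
  qed
next
  case (Br i j)
  with assms show ?thesis
    by (simp add: descendants_Br branch_share_def has_sum_finite_iff)
qed

lemma path_weight_sq_has_sum:
  assumes "v \<in> tree_V \<eta> \<kappa>"
  shows "((\<lambda>u. (cmod (path_weight (flat_completion \<kappa> lam a) N u))\<^sup>2) has_sum
            a (depth \<kappa> v + N) / a (depth \<kappa> v)) (descendants \<eta> \<kappa> N v)"
proof -
  define c where "c = a (depth \<kappa> v + N) / a (depth \<kappa> v) / branch_share \<eta> lam v"
  have "((\<lambda>u. c * branch_share \<eta> lam u) has_sum c * branch_share \<eta> lam v) (descendants \<eta> \<kappa> N v)"
    by (rule has_sum_cmult_right[OF branch_share_has_sum_descendants[OF assms]])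
  moreover have "c * branch_share \<eta> lam v = a (depth \<kappa> v + N) / a (depth \<kappa> v)"
    using branch_share_pos[OF assms] by (simp add: c_def)
  moreover have "(cmod (path_weight (flat_completion \<kappa> lam a) N u))\<^sup>2 = c * branch_share \<eta> lam u"
    if "u \<in> descendants \<eta> \<kappa> N v" for u
  proof -
    from that have u: "u \<in> tree_V \<eta> \<kappa>" "N \<le> depth \<kappa> u" "ancestor N u = v"
      by (auto simp: descendants_def)
    then have "depth \<kappa> u = depth \<kappa> v + N"
      using ancestor_in_tree_V[OF u(1,2)] by auto
    with u show ?thesis
      using path_weight_sq[OF u(1,2)] by (simp add: c_def)
  qed
  ultimately show ?thesis
    using has_sum_cong[of "descendants \<eta> \<kappa> N v"] by (metis (no_types, lifting))
qed

lemma weighted_sqnorm_summable: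
  assumes "(\<lambda>v. (cmod (f v))\<^sup>2) summable_on tree_V \<eta> \<kappa>"
  shows "(\<lambda>v. (cmod (f v))\<^sup>2 * (a (depth \<kappa> v + N) / a (depth \<kappa> v))) summable_on tree_V \<eta> \<kappa>"
proof (rule summable_on_comparison_test)
  show "(\<lambda>v. (cmod (f v))\<^sup>2 * a 1 ^ N) summable_on tree_V \<eta> \<kappa>"
    by (rule summable_on_cmult_left[OF assms])
  fix v
  have "a (depth \<kappa> v + N) / a (depth \<kappa> v) \<le> a 1 ^ N"
    using completely_alternating_growth[OF CA a_0, of "depth \<kappa> v" N] a_ge_1[of "depth \<kappa> v"]
    by (simp add: divide_le_eq)
  then show "(cmod (f v))\<^sup>2 * (a (depth \<kappa> v + N) / a (depth \<kappa> v)) \<le> (cmod (f v))\<^sup>2 * a 1 ^ N"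
    by (rule mult_left_mono) simp
  show "0 \<le> (cmod (f v))\<^sup>2 * (a (depth \<kappa> v + N) / a (depth \<kappa> v))"
    using a_ge_1[of "depth \<kappa> v"] a_ge_1[of "depth \<kappa> v + N"] by simp
qed

lemma sqnorm_power_flat_completion:
  assumes "ell2_vec \<eta> \<kappa> f"
  shows "sqnorm \<eta> \<kappa> ((wshift \<eta> \<kappa> (flat_completion \<kappa> lam a) ^^ N) f) =
           (\<Sum>\<^sub>\<infinity>v\<in>tree_V \<eta> \<kappa>. (cmod (f v))\<^sup>2 * (a (depth \<kappa> v + N) / a (depth \<kappa> v)))"
proof -
  have f0: "\<And>u. u \<notin> tree_V \<eta> \<kappa> \<Longrightarrow> f u = 0"
    and f_summable: "(\<lambda>u. (cmod (f u))\<^sup>2) summable_on tree_V \<eta> \<kappa>"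
    using assms by (auto simp: ell2_vec_def)
  define g where "g u = (cmod ((wshift \<eta> \<kappa> (flat_completion \<kappa> lam a) ^^ N) f u))\<^sup>2" for u
  define U where "U = {u \<in> tree_V \<eta> \<kappa>. N \<le> depth \<kappa> u}"
  have "(g has_sum (\<Sum>\<^sub>\<infinity>v\<in>tree_V \<eta> \<kappa>. (cmod (f v))\<^sup>2 * (a (depth \<kappa> v + N) / a (depth \<kappa> v)))) U"
    (is "(g has_sum ?s) U")
  proof (rule has_sum_fibers_nonneg)
    show "ancestor N u \<in> tree_V \<eta> \<kappa>" if "u \<in> U" for u
      using that ancestor_in_tree_V by (auto simp: U_def)
    show "(g has_sum (cmod (f v))\<^sup>2 * (a (depth \<kappa> v + N) / a (depth \<kappa> v)))
            {u \<in> U. ancestor N u = v}" if "v \<in> tree_V \<eta> \<kappa>" for v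
    proof -
      have "{u \<in> U. ancestor N u = v} = descendants \<eta> \<kappa> N v"
        by (auto simp: U_def descendants_def)
      moreover have "g u = (cmod (f v))\<^sup>2 * (cmod (path_weight (flat_completion \<kappa> lam a) N u))\<^sup>2"
        if "u \<in> descendants \<eta> \<kappa> N v" for u
        using that
        by (auto simp: g_def wshift_power[OF f0] descendants_def norm_mult power_mult_distrib)
      ultimately show ?thesis
        using has_sum_cmult_right[OF path_weight_sq_has_sum[OF \<open>v \<in> tree_V \<eta> \<kappa>\<close>]]
          has_sum_cong[of "descendants \<eta> \<kappa> N v" g] by auto
    qed
  qed (simp_all only: g_def zero_le_power2 weighted_sqnorm_summable[OF f_summable])
  also have "?this \<longleftrightarrow> (g has_sum ?s) (tree_V \<eta> \<kappa>)"
    by (rule has_sum_cong_neutral) (auto simp: U_def g_def wshift_power[OF f0])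
  finally show ?thesis
    unfolding sqnorm_def g_def by (rule infsumI)
qed

lemma bounded_weights_flat_completion: "bounded_weights \<eta> \<kappa> (flat_completion \<kappa> lam a)"
  unfolding bounded_weights_def
proof (intro exI[of _ "a 1"] ballI conjI)
  fix v
  assume "v \<in> tree_V \<eta> \<kappa>"
  have "path_weight w 1 u = w u" for w u
    by (simp add: path_weight_def)
  then have sum: "((\<lambda>u. (cmod (flat_completion \<kappa> lam a u))\<^sup>2) has_sum
                     a (depth \<kappa> v + 1) / a (depth \<kappa> v)) (children \<eta> \<kappa> v)"
    using path_weight_sq_has_sum[OF \<open>v \<in> tree_V \<eta> \<kappa>\<close>, of 1] by (simp add: children_eq_descendants_1)
  then show "(\<lambda>u. (cmod (flat_completion \<kappa> lam a u))\<^sup>2) summable_on children \<eta> \<kappa> v"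
    by (rule has_sum_imp_summable)
  have "a (depth \<kappa> v + 1) / a (depth \<kappa> v) \<le> a 1"
    using completely_alternating_growth[OF CA a_0, of "depth \<kappa> v" 1] a_ge_1[of "depth \<kappa> v"]
    by (simp add: divide_le_eq)
  with sum show "(\<Sum>\<^sub>\<infinity>u\<in>children \<eta> \<kappa> v. (cmod (flat_completion \<kappa> lam a u))\<^sup>2) \<le> a 1"
    by (simp add: infsumI)
qed

lemma comp_hyperexpansive_flat_completion:
  "comp_hyperexpansive \<eta> \<kappa> (flat_completion \<kappa> lam a)"
  unfolding comp_hyperexpansive_def
proof (intro allI impI)
  fix f
  assume f: "ell2_vec \<eta> \<kappa> f"
  define b where "b n v = (cmod (f v))\<^sup>2 / a (depth \<kappa> v) * a (n + depth \<kappa> v)" for n v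
  have "sqnorm \<eta> \<kappa> ((wshift \<eta> \<kappa> (flat_completion \<kappa> lam a) ^^ n) f) =
          infsum (b n) (tree_V \<eta> \<kappa>)" for n
    unfolding sqnorm_power_flat_completion[OF f] b_def by (simp add: add.commute)
  moreover have "completely_alternating (\<lambda>n. infsum (b n) (tree_V \<eta> \<kappa>))"
  proof (rule completely_alternating_infsum)
    show "completely_alternating (\<lambda>n. b n v)" for v
      unfolding b_def using a_ge_1[of "depth \<kappa> v"]
      by (intro completely_alternating_scale_shift[OF CA]) simp
    show "b n summable_on tree_V \<eta> \<kappa>" for n
      using weighted_sqnorm_summable[of f n] f unfolding b_def ell2_vec_def
      by (simp add: add.commute)
  qed
  ultimately show
    "completely_alternating (\<lambda>n. sqnorm \<eta> \<kappa> ((wshift \<eta> \<kappa> (flat_completion \<kappa> lam a) ^^ n) f))"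
    by simp
qed

lemma flat_completion_comp_hyperexpansive_completion:
  "is_completion \<eta> \<kappa> lam (flat_completion \<kappa> lam a) \<and> two_gen_flat \<eta> (flat_completion \<kappa> lam a)
     \<and> comp_hyperexpansive \<eta> \<kappa> (flat_completion \<kappa> lam a)"
  using bounded_weights_flat_completion comp_hyperexpansive_flat_completion
  by (simp add: is_completion_def two_gen_flat_def flat_completion_def)

end

theorem theorem9p7:
  fixes \<kappa> :: nat and \<eta> :: enat and lam :: "vtx \<Rightarrow> real"
  assumes "\<eta> \<ge> 2"
    and "\<forall>k<\<kappa>. lam (Neg k) > 0"
    and "\<forall>i. 1 \<le> i \<and> enat i \<le> \<eta> \<longrightarrow> lam (Br i 1) > 0"
  shows "((\<exists>w. is_completion \<eta> \<kappa> lam w \<and> comp_hyperexpansive \<eta> \<kappa> w) \<longleftrightarrow>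
            ((\<lambda>i. (lam (Br i 1))\<^sup>2) summable_on {i. 1 \<le> i \<and> enat i \<le> \<eta>} \<and>
             has_CA_extension (cseq \<eta> \<kappa> lam) (\<kappa> + 1)))
       \<and> ((\<exists>w. is_completion \<eta> \<kappa> lam w \<and> comp_hyperexpansive \<eta> \<kappa> w) \<longrightarrow>
            (\<exists>w. is_completion \<eta> \<kappa> lam w \<and> two_gen_flat \<eta> w \<and> comp_hyperexpansive \<eta> \<kappa> w))"
proof -
  have "1 \<le> \<eta>"
    using assms(1) by (rule order_trans[rotated]) simp
  have branch_weights_pos: "\<And>i. i \<in> branches \<eta> \<Longrightarrow> 0 < lam (Br i 1)"
    using assms(3) by simp
  have sufficient: "\<exists>w. is_completion \<eta> \<kappa> lam w \<and> two_gen_flat \<eta> w \<and> comp_hyperexpansive \<eta> \<kappa> w"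
    if "(\<lambda>i. (lam (Br i 1))\<^sup>2) summable_on branches \<eta>"
      and "has_CA_extension (cseq \<eta> \<kappa> lam) (\<kappa> + 1)"
  proof -
    from that(2) obtain a where "completely_alternating a"
      and "\<And>k. k \<le> \<kappa> + 1 \<Longrightarrow> a k = cseq \<eta> \<kappa> lam k"
      unfolding has_CA_extension_def by blast
    from flat_completion_comp_hyperexpansive_completion[OF \<open>1 \<le> \<eta>\<close> branch_weights_pos that(1) this]
    show ?thesis by blast
  qed
  have necessary: "(\<lambda>i. (lam (Br i 1))\<^sup>2) summable_on branches \<eta> \<and>
                     has_CA_extension (cseq \<eta> \<kappa> lam) (\<kappa> + 1)"
    if "is_completion \<eta> \<kappa> lam w" "comp_hyperexpansive \<eta> \<kappa> w" for w
    using completion_branches_summable[OF that(1)]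
      comp_hyperexpansive_completion_has_CA_extension[OF that] by blast
  show ?thesis
    using sufficient necessary by blast
qed

end
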